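(* Let $a<b$ be real numbers, let $f:[a,b]\to\mathbb{R}$, and let $c\in\left[a,\frac{a+b}{2}\right]$ be such that: (i) $f(c-x)+f(c+x)=2f(c)$ whenever $c\pm x\in[a,b]$; (ii) the restriction $f|_{[c,b]}$ is convex. Then \[ f(b_\mu)\le\int_a^b f(x)\,d\mu(x) \] for every Borel probability measure $\mu$ on $[a,b]$ whose barycenter $b_\mu=\int_a^b x\,d\mu(x)$ lies in the interval $[2c-a,b]$. Moreover, if in (ii) the restriction $f|_{[c,b]}$ is instead assumed concave (with (i) unchanged), then the reverse inequality $f(b_\mu)\ge\int_a^b f(x)\,d\mu(x)$ holds for every such $\mu$.
   Context: For a Borel probability measure $\mu$ on $[a,b]$, its barycenter is $b_\mu=\int_a^b x\,d\mu(x)$. *)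

theory Defs
  imports "HOL-Probability.Probability"
begin

definition barycenter :: "real measure \<Rightarrow> real" where
  "barycenter M = integral\<^sup>L M (\<lambda>x. x)"

end

theory Submission
  imports Defs
begin

text \<open>If the barycenter \<open>t\<close> lies strictly between \<open>c\<close> and \<open>b\<close>, take a supporting line \<open>\<ell>\<close> of the
convex function \<open>f\<close> at \<open>t\<close> on \<open>[c,b]\<close>. It supports \<open>f\<close> on \<open>[a,c]\<close> as well: for \<open>x \<in> [a,c]\<close> the
reflected point \<open>y = 2c - x\<close> lies in \<open>[c,t]\<close>, where the convex function \<open>f - \<ell>\<close>, which is
nonnegative and vanishes at \<open>t\<close>, is at most \<open>(f - \<ell>)(c)\<close>; since \<open>f x + f y = 2 f c\<close> and
\<open>\<ell> x + \<ell> y = 2 \<ell> c\<close>, this gives \<open>\<ell> x \<le> f x\<close>. Integrating \<open>\<ell> \<le> f\<close> against \<open>\<mu>\<close> is Jensen's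
inequality. If \<open>t\<close> is an endpoint of \<open>[a,b]\<close>, then \<open>\<mu>\<close> is a point mass. The concave case is
the convex case for \<open>-f\<close>.\<close>

lemma convex_on_Icc_supporting_line:
  fixes f :: "real \<Rightarrow> real"
  assumes "convex_on {p..q} f" and "t \<in> {p<..<q}"
  obtains s where "\<And>y. y \<in> {p..q} \<Longrightarrow> f t + s * (y - t) \<le> f y"
  using convex_le_Inf_differential[OF assms(1)] assms(2) by (metis interior_atLeastAtMost_real)

lemma convex_on_Icc_bounded:
  fixes f :: "real \<Rightarrow> real"
  assumes convex: "convex_on {p..q} f" and "p < q"
  obtains B where "\<And>y. y \<in> {p..q} \<Longrightarrow> \<bar>f y\<bar> \<le> B"
proof -
  define m where "m = (p + q) / 2"
  have "m \<in> {p<..<q}" using \<open>p < q\<close> unfolding m_def by auto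
  then obtain s where s: "\<And>y. y \<in> {p..q} \<Longrightarrow> f m + s * (y - m) \<le> f y"
    using convex_on_Icc_supporting_line[OF convex] by blast
  have "\<bar>f y\<bar> \<le> \<bar>f m\<bar> + \<bar>s\<bar> * (q - p) + \<bar>f p\<bar> + \<bar>f q\<bar>" if y: "y \<in> {p..q}" for y
  proof -
    have "\<bar>s * (y - m)\<bar> \<le> \<bar>s\<bar> * (q - p)"
      unfolding abs_mult using y \<open>m \<in> {p<..<q}\<close> by (intro mult_left_mono) auto
    moreover have "f y \<le> max (f p) (f q)"
      using convex_on_le_max[OF convex y] .
    ultimately show ?thesis using s[OF y] by linarith
  qed
  then show thesis using that by blast
qed

lemma borel_measurable_restrict_Icc_continuous_off_finite:
  fixes f :: "real \<Rightarrow> real"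
  assumes "finite X" and f: "continuous_on ({a<..<b} - X) f"
  shows "f \<in> borel_measurable (restrict_space borel {a..b})"
proof -
  let ?g = "\<lambda>x. if x \<in> {a..b} then f x else 0"
  have "continuous_on (({a<..<b} - X) \<union> {..<a} \<union> {b<..}) ?g"
  proof (intro continuous_on_open_Un)
    show "continuous_on ({a<..<b} - X) ?g"
      using f by (rule continuous_on_cong[THEN iffD1, rotated 2]) auto
  qed (use \<open>finite X\<close> in \<open>auto intro!: open_Diff finite_imp_closed
        continuous_on_cong[THEN iffD2, OF refl _ continuous_on_const]\<close>)
  moreover have "- (X \<union> {a, b}) \<subseteq> ({a<..<b} - X) \<union> {..<a} \<union> {b<..}"
    by auto
  ultimately have "?g \<in> borel_measurable borel"
    using \<open>finite X\<close> by (intro borel_measurable_continuous_countable_exceptions[of "X \<union> {a, b}"])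
      (auto intro: continuous_on_subset countable_finite)
  then have "?g \<in> borel_measurable (restrict_space borel {a..b})"
    by (rule measurable_restrict_space1)
  then show ?thesis
    by (rule measurable_cong[THEN iffD1, rotated]) (simp add: space_restrict_space)
qed

lemma (in prob_space) AE_eq_of_expectation_eq_bound:
  fixes X :: "'a \<Rightarrow> real"
  assumes "integrable M X" and "AE x in M. X x \<le> e" and "expectation X = e"
  shows "AE x in M. X x = e"
proof -
  have "(\<integral>x. e - X x \<partial>M) = 0"
    using assms(1,3) by (simp add: prob_space)
  then have "AE x in M. e - X x = 0"
    using integral_nonneg_eq_0_iff_AE[of M "\<lambda>x. e - X x"] assms(1,2) by auto
  then show ?thesis by auto
qed

lemma (in prob_space) supporting_line_le_expectation:
  fixes X :: "'a \<Rightarrow> real" and f :: "real \<Rightarrow> real"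
  assumes "integrable M X" and "integrable M (\<lambda>x. f (X x))"
    and "AE x in M. f t + s * (X x - t) \<le> f (X x)" and "expectation X = t"
  shows "f t \<le> expectation (\<lambda>x. f (X x))"
proof -
  have "f t = (\<integral>x. f t + s * (X x - t) \<partial>M)"
    using assms(1,4) by (simp add: prob_space)
  also have "\<dots> \<le> expectation (\<lambda>x. f (X x))"
    using assms(1-3) by (intro integral_mono_AE) auto
  finally show ?thesis .
qed

lemma concave_on_tangent_line: "convex S \<Longrightarrow> concave_on S (\<lambda>y::real. k + s * (y - t))"
  unfolding concave_on_iff
proof (intro conjI ballI allI impI)
  fix x y u v :: real assume "u + v = 1"
  have "u * (k + s * (x - t)) + v * (k + s * (y - t)) = (u + v) * k + s * (u * x + v * y - (u + v) * t)"
    by (simp add: algebra_simps)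
  then show "u * (k + s * (x - t)) + v * (k + s * (y - t)) \<le> k + s * (u *\<^sub>R x + v *\<^sub>R y - t)"
    using \<open>u + v = 1\<close> by simp
qed

locale point_reflected_convex =
  fixes a b c :: real and f :: "real \<Rightarrow> real"
  assumes a_less_b: "a < b"
    and center: "c \<in> {a..(a+b)/2}"
    and reflection: "\<And>x. x \<in> {a..c} \<Longrightarrow> f x + f (2 * c - x) = 2 * f c"
    and convex: "convex_on {c..b} f"
begin

lemma center_less_b: "c < b"
  using a_less_b center by auto

lemma reflect_mem: "x \<in> {a..c} \<Longrightarrow> 2 * c - x \<in> {c..b}"
  using center by auto

lemma continuous_off_center: "continuous_on ({a<..<b} - {c}) f"
proof -
  have right: "continuous_on {c<..<b} f"
    by (rule convex_on_continuous) (auto intro: convex_on_subset[OF convex])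
  have reflected: "continuous_on {a<..<c} (\<lambda>x. 2 * f c - f (2 * c - x))"
    by (intro continuous_intros continuous_on_compose2[OF right]) (use center in auto)
  have left: "continuous_on {a<..<c} f"
  proof (rule continuous_on_cong[THEN iffD1, OF refl _ reflected])
    fix x assume "x \<in> {a<..<c}"
    then show "2 * f c - f (2 * c - x) = f x" using reflection[of x] by auto
  qed
  have "{a<..<b} - {c} = {a<..<c} \<union> {c<..<b}"
    using center a_less_b by auto
  then show ?thesis
    using continuous_on_open_Un[OF _ _ left right] by simp
qed

lemma borel_measurable: "f \<in> borel_measurable (restrict_space borel {a..b})"
  by (rule borel_measurable_restrict_Icc_continuous_off_finite[OF _ continuous_off_center]) simp

lemma bounded:
  obtains B where "\<And>x. x \<in> {a..b} \<Longrightarrow> \<bar>f x\<bar> \<le> B"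
proof -
  obtain B where B: "\<And>y. y \<in> {c..b} \<Longrightarrow> \<bar>f y\<bar> \<le> B"
    using convex_on_Icc_bounded[OF convex center_less_b] by blast
  have "\<bar>f x\<bar> \<le> 2 * \<bar>f c\<bar> + B" if "x \<in> {a..b}" for x
  proof (cases "x < c")
    case True
    then have "x \<in> {a..c}" using that by auto
    then show ?thesis
      using reflection[of x] B[OF reflect_mem[OF \<open>x \<in> {a..c}\<close>]] by linarith
  next
    case False
    then show ?thesis using B[of x] that B[of c] center by auto
  qed
  then show thesis using that by blast
qed

lemma supporting_line:
  assumes "t \<in> {c<..<b}" and "2 * c - a \<le> t"
  obtains s where "\<And>x. x \<in> {a..b} \<Longrightarrow> f t + s * (x - t) \<le> f x"
proof -
  obtain s where right: "\<And>y. y \<in> {c..b} \<Longrightarrow> f t + s * (y - t) \<le> f y"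
    using convex_on_Icc_supporting_line[OF convex assms(1)] by blast
  define g where "g y = f y - (f t + s * (y - t))" for y
  have "convex_on {c..t} g"
    unfolding g_def using assms(1)
    by (intro convex_on_diff convex_on_subset[OF convex] concave_on_tangent_line) auto
  then have "g y \<le> max (g c) (g t)" if "y \<in> {c..t}" for y
    using convex_on_le_max that by blast
  moreover have "g t = 0" "0 \<le> g c"
    using right[of c] center_less_b center unfolding g_def by auto
  ultimately have g_le: "g y \<le> g c" if "y \<in> {c..t}" for y
    using that by fastforce
  have "f t + s * (x - t) \<le> f x" if "x \<in> {a..c}" for x
  proof -
    have "2 * c - x \<in> {c..t}" using that assms(2) by auto
    then have "g (2 * c - x) \<le> g c" by (rule g_le)
    then show ?thesis
      using reflection[OF that] \<open>0 \<le> g c\<close> unfolding g_def by (simp add: algebra_simps)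
  qed
  then show thesis
    using that right center by (metis atLeastAtMost_iff linorder_le_cases)
qed

lemma le_integral_at_barycenter:
  assumes "prob_space M" and sets_M: "sets M = sets (restrict_space borel {a..b})"
    and "barycenter M \<in> {2 * c - a..b}"
  shows "f (barycenter M) \<le> (\<integral>x. f x \<partial>M)"
proof -
  interpret prob_space M by fact
  have space_M: "space M = {a..b}"
    using sets_eq_imp_space_eq[OF sets_M] by (simp add: space_restrict_space)
  have measurable_M: "measurable M borel = measurable (restrict_space borel {a..b}) borel"
    by (rule measurable_cong_sets[OF sets_M refl])
  have f_measurable: "f \<in> borel_measurable M"
    unfolding measurable_M by (rule borel_measurable)
  have id_integrable: "integrable M (\<lambda>x. x)"
    by (rule integrable_const_bound[where B="\<bar>a\<bar> + \<bar>b\<bar>"])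
       (auto simp: space_M measurable_M intro: measurable_restrict_space1 intro!: AE_I2)
  obtain B where "\<And>x. x \<in> {a..b} \<Longrightarrow> \<bar>f x\<bar> \<le> B"
    using bounded by blast
  then have f_integrable: "integrable M f"
    by (intro integrable_const_bound[where B=B]) (auto simp: space_M f_measurable)
  define t where "t = barycenter M"
  have mean: "expectation (\<lambda>x. x) = t"
    unfolding t_def barycenter_def ..
  have point_mass: "(\<integral>x. f x \<partial>M) = f e" if "AE x in M. x = e" for e
  proof -
    have "(\<integral>x. f x \<partial>M) = (\<integral>x. f e \<partial>M)"
      by (rule integral_cong_AE) (use that f_measurable in auto)
    then show ?thesis by (simp add: prob_space)
  qed
  have t_bounds: "2 * c - a \<le> t" "t \<le> b"
    using assms(3) unfolding t_def by auto
  \<comment> \<open>\<open>t = c\<close> forces \<open>c = a\<close>\<close>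
  consider "t = b" | "t = a" | "t \<in> {c<..<b}"
    using t_bounds center by fastforce
  then have "f t \<le> (\<integral>x. f x \<partial>M)"
  proof cases
    case 1
    have "AE x in M. x = b"
      by (rule AE_eq_of_expectation_eq_bound[OF id_integrable _ mean[unfolded 1]])
         (auto simp: space_M intro!: AE_I2)
    then show ?thesis using point_mass 1 by simp
  next
    case 2
    have "AE x in M. - x = - a"
      by (rule AE_eq_of_expectation_eq_bound)
         (use id_integrable mean 2 in \<open>auto simp: space_M intro!: AE_I2\<close>)
    then show ?thesis using point_mass 2 by simp
  next
    case 3
    obtain s where "\<And>x. x \<in> {a..b} \<Longrightarrow> f t + s * (x - t) \<le> f x"
      using supporting_line[OF 3 t_bounds(1)] by blast
    then have "AE x in M. f t + s * (x - t) \<le> f x"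
      by (intro AE_I2) (simp add: space_M)
    then show ?thesis
      using supporting_line_le_expectation[OF id_integrable f_integrable _ mean] by simp
  qed
  then show ?thesis unfolding t_def .
qed

end

theorem theorem1:
  fixes a b c :: real and f :: "real \<Rightarrow> real"
  assumes "a < b"
    and "c \<in> {a..(a+b)/2}"
    and "\<forall>x. c - x \<in> {a..b} \<and> c + x \<in> {a..b} \<longrightarrow> f (c - x) + f (c + x) = 2 * f c"
  shows "(convex_on {c..b} f \<longrightarrow>
            (\<forall>M :: real measure. prob_space M \<and> sets M = sets (restrict_space borel {a..b})
               \<and> barycenter M \<in> {2*c - a..b}
               \<longrightarrow> f (barycenter M) \<le> (\<integral>x. f x \<partial>M)))
       \<and> (concave_on {c..b} f \<longrightarrow>
            (\<forall>M :: real measure. prob_space M \<and> sets M = sets (restrict_space borel {a..b})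
               \<and> barycenter M \<in> {2*c - a..b}
               \<longrightarrow> f (barycenter M) \<ge> (\<integral>x. f x \<partial>M)))"
proof -
  have reflection: "f x + f (2 * c - x) = 2 * f c" if "x \<in> {a..c}" for x
    using assms(3)[rule_format, of "c - x"] that assms(2) by auto
  have jensen: "g (barycenter M) \<le> (\<integral>x. g x \<partial>M)"
    if "convex_on {c..b} g" and "\<And>x. x \<in> {a..c} \<Longrightarrow> g x + g (2 * c - x) = 2 * g c"
      and "prob_space M \<and> sets M = sets (restrict_space borel {a..b}) \<and> barycenter M \<in> {2*c - a..b}"
    for g and M :: "real measure"
    using point_reflected_convex.le_integral_at_barycenter[OF point_reflected_convex.intro]
      assms(1,2) that by blast
  show ?thesis
  proof (intro conjI impI allI)
    fix M :: "real measure"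
    assume "concave_on {c..b} f"
      and "prob_space M \<and> sets M = sets (restrict_space borel {a..b}) \<and> barycenter M \<in> {2*c - a..b}"
    moreover have "- f x + - f (2 * c - x) = 2 * - f c" if "x \<in> {a..c}" for x
      using reflection[OF that] by simp
    ultimately have "- f (barycenter M) \<le> (\<integral>x. - f x \<partial>M)"
      by (intro jensen) (auto simp: concave_on_def)
    then show "f (barycenter M) \<ge> (\<integral>x. f x \<partial>M)" by simp
  qed (use jensen reflection in blast)
qed

end
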